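(* Let $M$ be a magma satisfying the identities $(xy)z = xx$ and $x(yz) = xx$ for all $x,y,z\in M$. Then $M$ additionally satisfies $xx = yy$ for all $x,y\in M$ if and only if $M$ avoids the magma $2_{LZ}$ on $\{0,1\}$ with Cayley table \[ \begin{array}{c|cc} 2_{LZ} & 0 & 1 \\ \hline 0 & 0 & 0 \\ 1 & 1 & 1 \end{array} \] (i.e. $xy=x$ for all $x,y$).
   Context: A magma is a nonempty set with a binary operation, written by juxtaposition. A magma $M$ avoids a magma $F$ if no submagma of $M$ (nonempty subset closed under the operation, with the restricted operation) is isomorphic to $F$. *)

theory Defs
  imports Main
begin

definition magma :: "'a set \<Rightarrow> ('a \<Rightarrow> 'a \<Rightarrow> 'a) \<Rightarrow> bool" where
  "magma M f \<longleftrightarrow> M \<noteq> {} \<and> (\<forall>x\<in>M. \<forall>y\<in>M. f x y \<in> M)"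

definition submagma :: "'a set \<Rightarrow> 'a set \<Rightarrow> ('a \<Rightarrow> 'a \<Rightarrow> 'a) \<Rightarrow> bool" where
  "submagma S M f \<longleftrightarrow> S \<noteq> {} \<and> S \<subseteq> M \<and> (\<forall>x\<in>S. \<forall>y\<in>S. f x y \<in> S)"

definition magma_iso :: "('a \<Rightarrow> 'b) \<Rightarrow> 'a set \<Rightarrow> ('a \<Rightarrow> 'a \<Rightarrow> 'a) \<Rightarrow> 'b set \<Rightarrow> ('b \<Rightarrow> 'b \<Rightarrow> 'b) \<Rightarrow> bool" where
  "magma_iso h S f T g \<longleftrightarrow> bij_betw h S T \<and> (\<forall>x\<in>S. \<forall>y\<in>S. h (f x y) = g (h x) (h y))"

definition avoids :: "'a set \<Rightarrow> ('a \<Rightarrow> 'a \<Rightarrow> 'a) \<Rightarrow> 'b set \<Rightarrow> ('b \<Rightarrow> 'b \<Rightarrow> 'b) \<Rightarrow> bool" where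
  "avoids M f F g \<longleftrightarrow> \<not> (\<exists>S h. submagma S M f \<and> magma_iso h S f F g)"

definition LZ2_carrier :: "nat set" where "LZ2_carrier = {0, 1}"
definition LZ2_op :: "nat \<Rightarrow> nat \<Rightarrow> nat" where "LZ2_op x y = x"

end

theory Submission
  imports Defs
begin

text \<open>Under the identity (xy)z = xx every square xx is a left zero, and two distinct left zeros
  a, b span a copy of 2_LZ. Conversely both elements of a copy of 2_LZ are idempotent, so they
  are distinct squares.\<close>

lemma not_avoids_LZ2_if_two_left_zeros:
  assumes "a \<in> M" "b \<in> M" "a \<noteq> b"
    and "\<forall>z\<in>M. f a z = a" "\<forall>z\<in>M. f b z = b"
  shows "\<not> avoids M f LZ2_carrier LZ2_op"
proof -
  define h where "h = (\<lambda>z. if z = a then 0 else 1 :: nat)"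
  have left_zero: "\<forall>u\<in>{a, b}. \<forall>v\<in>{a, b}. f u v = u"
    using assms by auto
  have "submagma {a, b} M f"
    using assms(1,2) left_zero by (auto simp: submagma_def)
  moreover have "bij_betw h {a, b} LZ2_carrier"
    using \<open>a \<noteq> b\<close> by (auto simp: bij_betw_def inj_on_def h_def LZ2_carrier_def)
  then have "magma_iso h {a, b} f LZ2_carrier LZ2_op"
    using left_zero by (simp add: magma_iso_def LZ2_op_def)
  ultimately show ?thesis
    unfolding avoids_def by blast
qed

lemma LZ2_copy_has_two_idempotents:
  assumes "submagma S M f" "magma_iso h S f LZ2_carrier LZ2_op"
  obtains a b where "a \<in> M" "b \<in> M" "a \<noteq> b" "f a a = a" "f b b = b"
proof -
  have bij: "bij_betw h S {0, 1}" and hom: "\<forall>x\<in>S. \<forall>y\<in>S. h (f x y) = h x"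
    using assms(2) by (auto simp: magma_iso_def LZ2_carrier_def LZ2_op_def)
  have closed: "\<forall>x\<in>S. \<forall>y\<in>S. f x y \<in> S"
    using assms(1) by (simp add: submagma_def)
  have idem: "f x x = x" if "x \<in> S" for x
    using bij hom closed that by (metis bij_betw_def inj_onD)
  obtain a b where "a \<in> S" "b \<in> S" "h a = 0" "h b = 1"
    using bij by (metis bij_betw_def imageE insertCI)
  moreover have "S \<subseteq> M"
    using assms(1) by (simp add: submagma_def)
  ultimately show ?thesis
    using that idem by (metis subsetD zero_neq_one)
qed

lemma avoids_LZ2_if_squares_constant:
  assumes "\<forall>x\<in>M. \<forall>y\<in>M. f x x = f y y"
  shows "avoids M f LZ2_carrier LZ2_op"
  unfolding avoids_def
proof (intro notI, elim exE conjE)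
  fix S h
  assume "submagma S M f" "magma_iso h S f LZ2_carrier LZ2_op"
  then obtain a b where "a \<in> M" "b \<in> M" "a \<noteq> b" "f a a = a" "f b b = b"
    by (rule LZ2_copy_has_two_idempotents)
  moreover have "f a a = f b b"
    using assms \<open>a \<in> M\<close> \<open>b \<in> M\<close> by blast
  ultimately show False
    by simp
qed

lemma squares_constant_if_avoids_LZ2:
  assumes "magma M f"
    and "\<forall>x\<in>M. \<forall>y\<in>M. \<forall>z\<in>M. f (f x y) z = f x x"
    and "avoids M f LZ2_carrier LZ2_op"
  shows "\<forall>x\<in>M. \<forall>y\<in>M. f x x = f y y"
proof (intro ballI, rule ccontr)
  fix x y
  assume "x \<in> M" "y \<in> M" "f x x \<noteq> f y y"
  have square_in: "f u u \<in> M" if "u \<in> M" for u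
    using assms(1) that by (simp add: magma_def)
  have square_left_zero: "\<forall>z\<in>M. f (f u u) z = f u u" if "u \<in> M" for u
    using assms(2) that by blast
  have "\<not> avoids M f LZ2_carrier LZ2_op"
    using \<open>x \<in> M\<close> \<open>y \<in> M\<close> \<open>f x x \<noteq> f y y\<close>
    by (intro not_avoids_LZ2_if_two_left_zeros[of "f x x" M "f y y" f]
        square_in square_left_zero)
  then show False
    using assms(3) by contradiction
qed

theorem mainTheorem1:
  fixes M :: "'a set" and f :: "'a \<Rightarrow> 'a \<Rightarrow> 'a"
  assumes "magma M f"
    and "\<forall>x\<in>M. \<forall>y\<in>M. \<forall>z\<in>M. f (f x y) z = f x x"
    and "\<forall>x\<in>M. \<forall>y\<in>M. \<forall>z\<in>M. f x (f y z) = f x x"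
  shows "(\<forall>x\<in>M. \<forall>y\<in>M. f x x = f y y) \<longleftrightarrow> avoids M f LZ2_carrier LZ2_op"
  using avoids_LZ2_if_squares_constant squares_constant_if_avoids_LZ2[OF assms(1,2)] by blast

end
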